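(* Let $a$ and $b$ be relatively prime integers with $1<a<b$ and $S=\langle a,b\rangle$. Let $x\in I(S)$. If $n$ is the smallest positive integer such that $x+na\in S$, then $x+na\in b\mathbb{N}$.
   Context: $\mathbb{N}$ is the set of nonnegative integers, $b\mathbb{N}=\{bk:k\in\mathbb{N}\}$, and $\langle a,b\rangle=\{\lambda_1a+\lambda_2b:\lambda_1,\lambda_2\in\mathbb{N}\}$. $I(S)$ is the set of isolated gaps of $S$, i.e. elements $x\in\mathbb{N}\setminus S$ with $x-1,x+1\in S$. *)

theory Defs
  imports Main
begin

definition gen2 :: "nat \<Rightarrow> nat \<Rightarrow> nat set" where
  "gen2 a b = {l1 * a + l2 * b | l1 l2. True}"

definition isolated_gaps :: "nat set \<Rightarrow> nat set" where
  "isolated_gaps S = {x. x \<notin> S \<and> x \<ge> 1 \<and> x - 1 \<in> S \<and> x + 1 \<in> S}"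

definition multiples :: "nat \<Rightarrow> nat set" where
  "multiples b = {b * k | k. True}"

end

theory Submission
  imports Defs
begin

text \<open>Write \<open>x + n a = l\<^sub>1 a + l\<^sub>2 b\<close>. If \<open>l\<^sub>1 \<ge> n\<close>, cancelling \<open>n a\<close> puts the gap \<open>x\<close>
  into \<open>S\<close>; if \<open>0 < l\<^sub>1 < n\<close>, cancelling one \<open>a\<close> puts \<open>x + (n - 1) a\<close> into \<open>S\<close>, against the
  minimality of \<open>n\<close>. Hence \<open>l\<^sub>1 = 0\<close>.\<close>

lemma gen2_diff_multiple:
  fixes a b k l1 l2 :: nat
  assumes "k \<le> l1"
  shows "l1 * a + l2 * b - k * a \<in> gen2 a b"
proof -
  have "l1 * a + l2 * b - k * a = (l1 - k) * a + l2 * b"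
    using assms by (simp add: diff_mult_distrib mult_le_mono1)
  then show ?thesis by (auto simp: gen2_def)
qed

lemma minimal_shift_into_gen2_is_multiple:
  fixes a b x n :: nat
  assumes gap: "x \<notin> gen2 a b"
    and shifted: "x + n * a \<in> gen2 a b"
    and minimal: "\<And>m. 0 < m \<Longrightarrow> m < n \<Longrightarrow> x + m * a \<notin> gen2 a b"
  shows "x + n * a \<in> multiples b"
proof -
  obtain l1 l2 where repr: "x + n * a = l1 * a + l2 * b"
    using shifted by (auto simp: gen2_def)
  have "l1 < n"
  proof (rule ccontr)
    assume "\<not> l1 < n"
    then have "x + n * a - n * a \<in> gen2 a b"
      unfolding repr by (intro gen2_diff_multiple) simp
    with gap show False by simp
  qed
  have "l1 = 0"
  proof (rule ccontr)
    assume "l1 \<noteq> 0"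
    then have "x + n * a - 1 * a \<in> gen2 a b"
      unfolding repr by (intro gen2_diff_multiple) simp
    moreover have "x + n * a - 1 * a = x + (n - 1) * a"
      using \<open>l1 < n\<close> by (simp add: diff_mult_distrib)
    ultimately show False
      using minimal[of "n - 1"] \<open>l1 \<noteq> 0\<close> \<open>l1 < n\<close> by simp
  qed
  then show ?thesis
    using repr by (auto simp: multiples_def)
qed

theorem lemma4p5:
  fixes a b x n :: nat
  assumes "coprime a b" and "1 < a" and "a < b"
    and "x \<in> isolated_gaps (gen2 a b)"
    and "n > 0" and "x + n * a \<in> gen2 a b"
    and "\<And>m. 0 < m \<Longrightarrow> m < n \<Longrightarrow> x + m * a \<notin> gen2 a b"
  shows "x + n * a \<in> multiples b"
proof (rule minimal_shift_into_gen2_is_multiple)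
  show "x \<notin> gen2 a b"
    using assms(4) by (simp add: isolated_gaps_def)
qed (use assms(6,7) in auto)

end
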